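(* Let $U\subseteq(\Sigma\Gamma)^*$ be a regular $(\Sigma\Gamma)^*$-prefix closed set and $T=U\Sigma^*\Gamma^*$. Then $\mathit{maxsync}(T,T)$ is regular.
   Context: $\Sigma,\Gamma$ are disjoint finite alphabets. A set $U\subseteq(\Sigma\Gamma)^*$ is $(\Sigma\Gamma)^*$-prefix closed if $uab\in U$ implies $u\in U$ for all $u\in(\Sigma\Gamma)^*$, $a\in\Sigma$, $b\in\Gamma$. For $w\in(\Sigma\cup\Gamma)^*$, $\llbracket w\rrbracket=(\pi_{\mathtt i}(w),\pi_{\mathtt o}(w))$ where $\pi_{\mathtt i}$ (resp. $\pi_{\mathtt o}$) deletes all letters of $\Gamma$ (resp. $\Sigma$). A shift of $w$ is a position $i\in\{1,\dots,|w|-1\}$ with exactly one of $w[i],w[i+1]$ in $\Sigma$, $\mathit{shift}(w)$ is the number of shifts, and $\mathrm{Reg}_{\mathsf{FS}}$ is the class of regular languages $L$ with $\sup_{w\in L}\mathit{shift}(w)<\infty$. For $x\in(\Sigma\cup\Gamma)^*$, $x^{-1}T=\{z:xz\in T\}$, and $w[1,i]$ is the prefix of $w$ of length $i$. For $w,w'\in T$ with $\llbracket w\rrbracket=\llbracket w'\rrbracket$, write $w\preceq_T w'$ if for all $i\le|w|$, $(w'[1,i])^{-1}T\in\mathrm{Reg}_{\mathsf{FS}}$ implies $(w[1,i])^{-1}T\in\mathrm{Reg}_{\mathsf{FS}}$. $\mathit{maxsync}(T,T)=\{w\in T:\ w'\preceq_T w\text{ for all }w'\in T\text{ with }\llbracket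 w'\rrbracket=\llbracket w\rrbracket\}$. *)

theory Defs
  imports Main
begin

definition lconc :: "'a list set \<Rightarrow> 'a list set \<Rightarrow> 'a list set" where
  "lconc A B = {u @ v | u v. u \<in> A \<and> v \<in> B}"

inductive_set lstar :: "'a list set \<Rightarrow> 'a list set" for A :: "'a list set" where
  lstar_Nil: "[] \<in> lstar A"
| lstar_app: "u \<in> A \<Longrightarrow> v \<in> lstar A \<Longrightarrow> u @ v \<in> lstar A"

inductive regular :: "'a list set \<Rightarrow> bool" where
  reg_empty: "regular {}"
| reg_eps: "regular {[]}"
| reg_letter: "regular {[a]}"
| reg_union: "regular A \<Longrightarrow> regular B \<Longrightarrow> regular (A \<union> B)"
| reg_conc: "regular A \<Longrightarrow> regular B \<Longrightarrow> regular (lconc A B)"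
| reg_star: "regular A \<Longrightarrow> regular (lstar A)"

definition SG_words :: "'a set \<Rightarrow> 'a set \<Rightarrow> 'a list set" where
  "SG_words \<Sigma> \<Gamma> = lstar {[a, b] | a b. a \<in> \<Sigma> \<and> b \<in> \<Gamma>}"

definition SG_prefix_closed :: "'a set \<Rightarrow> 'a set \<Rightarrow> 'a list set \<Rightarrow> bool" where
  "SG_prefix_closed \<Sigma> \<Gamma> U \<longleftrightarrow>
     (\<forall>u a b. u \<in> SG_words \<Sigma> \<Gamma> \<and> a \<in> \<Sigma> \<and> b \<in> \<Gamma> \<and> u @ [a, b] \<in> U \<longrightarrow> u \<in> U)"

definition proj_i :: "'a set \<Rightarrow> 'a list \<Rightarrow> 'a list" where
  "proj_i \<Gamma> w = filter (\<lambda>x. x \<notin> \<Gamma>) w"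

definition proj_o :: "'a set \<Rightarrow> 'a list \<Rightarrow> 'a list" where
  "proj_o \<Sigma> w = filter (\<lambda>x. x \<notin> \<Sigma>) w"

definition sem :: "'a set \<Rightarrow> 'a set \<Rightarrow> 'a list \<Rightarrow> 'a list \<times> 'a list" where
  "sem \<Sigma> \<Gamma> w = (proj_i \<Gamma> w, proj_o \<Sigma> w)"

text \<open>Number of shifts (positions are 0-indexed here: i and i+1 with i+1 < |w|).\<close>
definition shift :: "'a set \<Rightarrow> 'a list \<Rightarrow> nat" where
  "shift \<Sigma> w = card {i. Suc i < length w \<and> ((w ! i \<in> \<Sigma>) \<noteq> (w ! Suc i \<in> \<Sigma>))}"

definition RegFS :: "'a set \<Rightarrow> 'a list set \<Rightarrow> bool" where
  "RegFS \<Sigma> L \<longleftrightarrow> regular L \<and> (\<exists>B::nat. \<forall>w\<in>L. shift \<Sigma> w \<le> B)"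

definition lquot :: "'a list \<Rightarrow> 'a list set \<Rightarrow> 'a list set" where
  "lquot x T = {z. x @ z \<in> T}"

definition sync_le :: "'a set \<Rightarrow> 'a set \<Rightarrow> 'a list set \<Rightarrow> 'a list \<Rightarrow> 'a list \<Rightarrow> bool" where
  "sync_le \<Sigma> \<Gamma> T w w' \<longleftrightarrow> w \<in> T \<and> w' \<in> T \<and> sem \<Sigma> \<Gamma> w = sem \<Sigma> \<Gamma> w' \<and>
     (\<forall>i \<le> length w. RegFS \<Sigma> (lquot (take i w') T) \<longrightarrow> RegFS \<Sigma> (lquot (take i w) T))"

definition maxsync :: "'a set \<Rightarrow> 'a set \<Rightarrow> 'a list set \<Rightarrow> 'a list set" where
  "maxsync \<Sigma> \<Gamma> T = {w \<in> T. \<forall>w' \<in> T. sem \<Sigma> \<Gamma> w' = sem \<Sigma> \<Gamma> w \<longrightarrow> sync_le \<Sigma> \<Gamma> T w' w}"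

end

(*
  For every x, the residual x\<inverse>T has boundedly many shifts iff x\<inverse>U is finite: words of U
  alternate between \<Sigma> and \<Gamma>, so each of their positions is a shift, while \<Sigma>\<^sup>*\<Gamma>\<^sup>* contributes
  at most one shift. Hence a word w \<in> T fails to be maximally synchronised exactly when it has the
  form u a c s b g with u \<in> U, a, c \<in> \<Sigma>, b \<in> \<Gamma> and (u a b)\<inverse>U infinite: then u a b c s g is an
  equivalent word of T that is better synchronised at position |u| + 2. Conversely, for any other
  w \<in> T, an equivalent word cannot deviate from w at a position where it still has an infinite
  residual of U. So maxsync(T, T) is T minus a regular set, and it is regular because a language
  over a finite alphabet is regular iff it has finitely many residuals.
*)
theory Submission
  imports Defs
begin

section \<open>Residuals of languages\<close>

lemma lquot_Nil [simp]: "lquot [] L = L"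
  by (simp add: lquot_def)

lemma lquot_append: "lquot (x @ y) L = lquot y (lquot x L)"
  by (simp add: lquot_def)

lemma in_lquot_iff [simp]: "z \<in> lquot x L \<longleftrightarrow> x @ z \<in> L"
  by (simp add: lquot_def)

lemma lquot_Un: "lquot x (A \<union> B) = lquot x A \<union> lquot x B"
  by auto

lemma lquot_Diff: "lquot x (A - B) = lquot x A - lquot x B"
  by auto

lemma lconcI: "u \<in> A \<Longrightarrow> v \<in> B \<Longrightarrow> u @ v \<in> lconc A B"
  unfolding lconc_def by blast

lemma lquot_lconc:
  "lquot x (lconc A B) =
     lconc (lquot x A) B \<union> \<Union> {lquot (drop k x) B | k. k \<le> length x \<and> take k x \<in> A}"
proof (intro equalityI subsetI)
  fix z assume "z \<in> lquot x (lconc A B)"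
  then obtain u v where uv: "x @ z = u @ v" "u \<in> A" "v \<in> B"
    by (auto simp: lconc_def)
  then obtain us where "x = u @ us \<and> us @ z = v \<or> x @ us = u \<and> z = us @ v"
    by (auto simp: append_eq_append_conv2)
  then show "z \<in> lconc (lquot x A) B \<union> \<Union> {lquot (drop k x) B | k. k \<le> length x \<and> take k x \<in> A}"
  proof
    assume "x = u @ us \<and> us @ z = v"
    then have "z \<in> lquot (drop (length u) x) B" "length u \<le> length x" "take (length u) x \<in> A"
      using uv by auto
    then show ?thesis by blast
  next
    assume "x @ us = u \<and> z = us @ v"
    then have "z \<in> lconc (lquot x A) B"
      using uv lconcI[of us "lquot x A" v B] by simp
    then show ?thesis by blast
  qed
next
  fix z assume "z \<in> lconc (lquot x A) B \<union> \<Union> {lquot (drop k x) B | k. k \<le> length x \<and> take k x \<in> A}"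
  then show "z \<in> lquot x (lconc A B)"
  proof
    assume "z \<in> lconc (lquot x A) B"
    then obtain u v where "z = u @ v" "x @ u \<in> A" "v \<in> B"
      by (auto simp: lconc_def)
    then show ?thesis using lconcI[of "x @ u" A v B] by (simp only: in_lquot_iff append_assoc)
  next
    assume "z \<in> \<Union> {lquot (drop k x) B | k. k \<le> length x \<and> take k x \<in> A}"
    then obtain k where "take k x \<in> A" "drop k x @ z \<in> B"
      by auto
    then show ?thesis unfolding lconc_def in_lquot_iff
      by (intro CollectI exI[of _ "take k x"] exI[of _ "drop k x @ z"]) simp
  qed
qed

lemma lstar_append: "a \<in> lstar A \<Longrightarrow> b \<in> lstar A \<Longrightarrow> a @ b \<in> lstar A"
  by (induction a rule: lstar.induct) (auto intro: lstar.intros)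

lemma lstar_append_split:
  assumes "x @ z \<in> lstar A" and "x \<noteq> []"
  shows "\<exists>x1 y z1 z2. x = x1 @ y \<and> y \<noteq> [] \<and> x1 \<in> lstar A \<and> y @ z1 \<in> A \<and>
           z = z1 @ z2 \<and> z2 \<in> lstar A"
  using assms
proof (induction "x @ z" arbitrary: x z rule: lstar.induct)
  case lstar_Nil
  then show ?case by simp
next
  case (lstar_app u v)
  then obtain us where "x = u @ us \<and> us @ z = v \<or> x @ us = u \<and> z = us @ v"
    by (auto simp: append_eq_append_conv2)
  then show ?case
  proof
    assume split: "x = u @ us \<and> us @ z = v"
    show ?thesis
    proof (cases "us = []")
      case True
      then show ?thesis
        using split lstar_app by (intro exI[of _ "[]"] exI[of _ u] exI[of _ "[]"] exI[of _ z])
          (auto intro: lstar.intros)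
    next
      case False
      with split lstar_app.hyps(3) obtain x1 y z1 z2 where
        "us = x1 @ y" "y \<noteq> []" "x1 \<in> lstar A" "y @ z1 \<in> A" "z = z1 @ z2" "z2 \<in> lstar A"
        by blast
      then show ?thesis
        using split lstar_app.hyps(1)
        by (intro exI[of _ "u @ x1"] exI[of _ y] exI[of _ z1] exI[of _ z2]) (auto intro: lstar.intros)
    qed
  next
    assume "x @ us = u \<and> z = us @ v"
    then show ?thesis
      using lstar_app by (intro exI[of _ "[]"] exI[of _ x] exI[of _ us] exI[of _ v])
        (auto intro: lstar.intros)
  qed
qed

lemma lquot_lstar:
  assumes "x \<noteq> []"
  shows "lquot x (lstar A) =
           lconc (\<Union> {lquot y A | y. \<exists>x1. x = x1 @ y \<and> y \<noteq> [] \<and> x1 \<in> lstar A}) (lstar A)"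
    (is "_ = lconc (\<Union> ?Q) _")
proof (intro equalityI subsetI)
  fix z assume "z \<in> lquot x (lstar A)"
  then have "x @ z \<in> lstar A"
    by simp
  with assms obtain x1 y z1 z2 where split: "x = x1 @ y" "y \<noteq> []" "x1 \<in> lstar A"
    "y @ z1 \<in> A" "z = z1 @ z2" "z2 \<in> lstar A"
    using lstar_append_split by blast
  then have "lquot y A \<in> ?Q" "z1 \<in> lquot y A"
    by auto
  then have "z1 \<in> \<Union> ?Q"
    by blast
  then show "z \<in> lconc (\<Union> ?Q) (lstar A)"
    unfolding split(5) using split(6) by (rule lconcI)
next
  fix z assume "z \<in> lconc (\<Union> ?Q) (lstar A)"
  then obtain z1 z2 where z: "z = z1 @ z2" "z1 \<in> \<Union> ?Q" "z2 \<in> lstar A"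
    unfolding lconc_def by blast
  then obtain x1 y where y: "y @ z1 \<in> A" "x = x1 @ y" "x1 \<in> lstar A"
    by auto
  have "x1 @ (y @ z1) @ z2 \<in> lstar A"
    using lstar_append[OF y(3) lstar_app[OF y(1) z(3)]] .
  then show "z \<in> lquot x (lstar A)"
    using z(1) y(2) by simp
qed

lemma finite_lquot:
  assumes "finite L"
  shows "finite (lquot x L)"
proof (rule finite_surj[OF assms])
  show "lquot x L \<subseteq> drop (length x) ` L"
  proof
    fix z assume "z \<in> lquot x L"
    then show "z \<in> drop (length x) ` L"
      using image_eqI[of z "drop (length x)" "x @ z"] by simp
  qed
qed

definition residuals :: "'a list set \<Rightarrow> 'a list set set" where
  "residuals L = range (\<lambda>x. lquot x L)"

lemma lquot_in_residuals [simp]: "lquot x L \<in> residuals L"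
  by (simp add: residuals_def)

lemma finite_residuals: "regular L \<Longrightarrow> finite (residuals L)"
proof (induction rule: regular.induct)
  case reg_empty
  have "residuals {} \<subseteq> {{}}"
    by (auto simp: residuals_def lquot_def)
  then show ?case by (rule finite_subset) simp
next
  case reg_eps
  have "residuals {[]} \<subseteq> {{[]}, {}}"
    by (auto simp: residuals_def lquot_def)
  then show ?case by (rule finite_subset) simp
next
  case (reg_letter a)
  have "lquot x {[a]} \<in> {{[a]}, {[]}, {}}" for x
    by (cases x) (auto simp: lquot_def Cons_eq_append_conv)
  then have "residuals {[a]} \<subseteq> {{[a]}, {[]}, {}}"
    by (auto simp: residuals_def)
  then show ?case by (rule finite_subset) simp
next
  case (reg_union A B)
  have "residuals (A \<union> B) \<subseteq> (\<lambda>(P, Q). P \<union> Q) ` (residuals A \<times> residuals B)"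
    by (auto simp: residuals_def lquot_Un)
  then show ?case by (rule finite_subset) (use reg_union in auto)
next
  case (reg_conc A B)
  have "residuals (lconc A B) \<subseteq> (\<lambda>(P, S). lconc P B \<union> \<Union> S) ` (residuals A \<times> Pow (residuals B))"
    by (auto simp: residuals_def lquot_lconc)
  then show ?case by (rule finite_subset) (use reg_conc in auto)
next
  case (reg_star A)
  have "residuals (lstar A) \<subseteq> insert (lstar A) ((\<lambda>S. lconc (\<Union> S) (lstar A)) ` Pow (residuals A))"
  proof
    fix Q assume "Q \<in> residuals (lstar A)"
    then obtain x where Q: "Q = lquot x (lstar A)"
      by (auto simp: residuals_def)
    show "Q \<in> insert (lstar A) ((\<lambda>S. lconc (\<Union> S) (lstar A)) ` Pow (residuals A))"
    proof (cases "x = []")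
      case True
      then show ?thesis using Q by simp
    next
      case False
      then show ?thesis
        unfolding Q lquot_lstar[OF False] by (intro insertI2 imageI) auto
    qed
  qed
  then show ?case by (rule finite_subset) (use reg_star in auto)
qed

section \<open>Regular languages via residuals\<close>

lemma regular_singleton: "regular {w}"
proof (induction w)
  case Nil
  then show ?case by (rule reg_eps)
next
  case (Cons a w)
  have "{a # w} = lconc {[a]} {w}"
    by (auto simp: lconc_def)
  then show ?case using reg_conc[OF reg_letter Cons] by simp
qed

lemma regular_finite: "finite F \<Longrightarrow> regular F"
proof (induction rule: finite_induct)
  case empty
  then show ?case by (rule reg_empty)
next
  case (insert w F)
  then show ?case using reg_union[OF regular_singleton] insert_is_Un by metis
qed

lemma regular_UN: "finite I \<Longrightarrow> (\<And>i. i \<in> I \<Longrightarrow> regular (f i)) \<Longrightarrow> regular (\<Union>i\<in>I. f i)"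
  by (induction rule: finite_induct) (auto intro: reg_empty reg_union)

text \<open>Kleene's construction for the automaton whose states are residuals: the words over \<open>A\<close>
  leading from state \<open>p\<close> to state \<open>q\<close> through intermediate states in \<open>S\<close>.\<close>

definition kleene_words :: "'a set \<Rightarrow> 'a list set set \<Rightarrow> 'a list set \<Rightarrow> 'a list set \<Rightarrow> 'a list set"
  where "kleene_words A S p q =
    {x \<in> lists A. lquot x p = q \<and> (\<forall>i. 0 < i \<and> i < length x \<longrightarrow> lquot (take i x) p \<in> S)}"

lemma kleene_wordsI:
  "x \<in> lists A \<Longrightarrow> lquot x p = q \<Longrightarrow> (\<And>i. 0 < i \<Longrightarrow> i < length x \<Longrightarrow> lquot (take i x) p \<in> S)
    \<Longrightarrow> x \<in> kleene_words A S p q"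
  unfolding kleene_words_def by auto

lemma kleene_wordsD:
  assumes "x \<in> kleene_words A S p q"
  shows "x \<in> lists A" "lquot x p = q" "\<And>i. 0 < i \<Longrightarrow> i < length x \<Longrightarrow> lquot (take i x) p \<in> S"
  using assms unfolding kleene_words_def by auto

lemma kleene_words_mono: "S \<subseteq> S' \<Longrightarrow> kleene_words A S p q \<subseteq> kleene_words A S' p q"
  by (auto simp: kleene_words_def)

lemma Nil_in_kleene_words: "[] \<in> kleene_words A S p p"
  by (simp add: kleene_words_def)

lemma regular_kleene_words_empty:
  assumes "finite A"
  shows "regular (kleene_words A {} p q)"
proof -
  have "kleene_words A {} p q \<subseteq> {xs. set xs \<subseteq> A \<and> length xs \<le> 1}"
    by (auto simp: kleene_words_def dest!: spec[of _ 1])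
  then show ?thesis
    using finite_lists_length_le[OF assms] finite_subset regular_finite by blast
qed

lemma append_in_kleene_words:
  assumes x: "x \<in> kleene_words A S p r" and y: "y \<in> kleene_words A S r q" and "r \<in> S"
  shows "x @ y \<in> kleene_words A S p q"
proof (rule kleene_wordsI)
  show "x @ y \<in> lists A"
    using kleene_wordsD(1)[OF x] kleene_wordsD(1)[OF y] by simp
  show "lquot (x @ y) p = q"
    using kleene_wordsD(2)[OF x] kleene_wordsD(2)[OF y] by (simp add: lquot_append)
  fix i assume i: "0 < i" "i < length (x @ y)"
  consider "i < length x" | "i = length x" | "length x < i"
    by linarith
  then show "lquot (take i (x @ y)) p \<in> S"
  proof cases
    case 1
    then show ?thesis using kleene_wordsD(3)[OF x i(1)] by simp
  next
    case 2
    then show ?thesis using kleene_wordsD(2)[OF x] \<open>r \<in> S\<close> by simp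
  next
    case 3
    then have "lquot (take i (x @ y)) p = lquot (take (i - length x) y) r"
      using kleene_wordsD(2)[OF x] by (simp add: lquot_append)
    then show ?thesis using kleene_wordsD(3)[OF y] 3 i by simp
  qed
qed

lemma lstar_kleene_words:
  "xs \<in> lstar (kleene_words A S s s) \<Longrightarrow> xs \<in> kleene_words A (insert s S) s s"
proof (induction rule: lstar.induct)
  case lstar_Nil
  then show ?case by (rule Nil_in_kleene_words)
next
  case (lstar_app u v)
  then show ?case
    using append_in_kleene_words kleene_words_mono[of S "insert s S"] by blast
qed

lemma take_in_kleene_words:
  assumes x: "x \<in> kleene_words A S' p q" and "i \<le> length x"
    and S: "\<And>j. 0 < j \<Longrightarrow> j < i \<Longrightarrow> lquot (take j x) p \<in> S"
  shows "take i x \<in> kleene_words A S p (lquot (take i x) p)"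
proof (rule kleene_wordsI)
  show "take i x \<in> lists A"
    using kleene_wordsD(1)[OF x] by (auto dest: in_set_takeD)
qed (use S in auto)

lemma drop_in_kleene_words:
  assumes x: "x \<in> kleene_words A S p q"
  shows "drop i x \<in> kleene_words A S (lquot (take i x) p) q"
proof (rule kleene_wordsI)
  show "drop i x \<in> lists A"
    using kleene_wordsD(1)[OF x] by (auto dest: in_set_dropD)
  show "lquot (drop i x) (lquot (take i x) p) = q"
    using kleene_wordsD(2)[OF x] by (simp flip: lquot_append)
  fix j assume j: "0 < j" "j < length (drop i x)"
  have "lquot (take j (drop i x)) (lquot (take i x) p) = lquot (take (i + j) x) p"
    by (simp add: take_add flip: lquot_append)
  then show "lquot (take j (drop i x)) (lquot (take i x) p) \<in> S"
    using kleene_wordsD(3)[OF x] j by simp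
qed

lemma kleene_words_insert_split:
  assumes x: "x \<in> kleene_words A (insert s S) p q"
    and visit: "\<exists>j. 0 < j \<and> j < length x \<and> lquot (take j x) p \<notin> S"
  shows "\<exists>i. 0 < i \<and> i < length x \<and> take i x \<in> kleene_words A S p s \<and>
           drop i x \<in> kleene_words A (insert s S) s q"
proof -
  define i where "i = (LEAST j. 0 < j \<and> j < length x \<and> lquot (take j x) p \<notin> S)"
  have i: "0 < i" "i < length x" "lquot (take i x) p \<notin> S"
    using LeastI_ex[OF visit] unfolding i_def by auto
  have before: "lquot (take j x) p \<in> S" if "0 < j" "j < i" for j
    using that i(2) not_less_Least[of j "\<lambda>j. 0 < j \<and> j < length x \<and> lquot (take j x) p \<notin> S"]
    unfolding i_def by auto
  have s: "lquot (take i x) p = s"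
    using i kleene_wordsD(3)[OF x] by blast
  show ?thesis
    using take_in_kleene_words[OF x _ before] drop_in_kleene_words[OF x, of i] i s by auto
qed

lemma kleene_words_from_insert:
  "y \<in> kleene_words A (insert s S) s q \<Longrightarrow>
     y \<in> lconc (lstar (kleene_words A S s s)) (kleene_words A S s q)"
proof (induction "length y" arbitrary: y rule: less_induct)
  case less
  show ?case
  proof (cases "\<exists>j. 0 < j \<and> j < length y \<and> lquot (take j y) s \<notin> S")
    case False
    then have "y \<in> kleene_words A S s q"
      using less.prems by (auto simp: kleene_words_def)
    then show ?thesis using lconcI[OF lstar_Nil] by fastforce
  next
    case True
    from kleene_words_insert_split[OF less.prems True] obtain i where
      i: "0 < i" "i < length y" "take i y \<in> kleene_words A S s s"
        "drop i y \<in> kleene_words A (insert s S) s q"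
      by blast
    then have "drop i y \<in> lconc (lstar (kleene_words A S s s)) (kleene_words A S s q)"
      using less.hyps by simp
    then obtain a b where ab: "drop i y = a @ b" "a \<in> lstar (kleene_words A S s s)"
      "b \<in> kleene_words A S s q"
      unfolding lconc_def by blast
    have "y = take i y @ a @ b"
      using ab(1) append_take_drop_id[of i y] by simp
    then show ?thesis
      using lconcI[OF lstar_app[OF i(3) ab(2)] ab(3)] by simp
  qed
qed

lemma kleene_words_insert:
  "kleene_words A (insert s S) p q =
     kleene_words A S p q \<union>
     lconc (kleene_words A S p s) (lconc (lstar (kleene_words A S s s)) (kleene_words A S s q))"
proof (intro equalityI subsetI)
  fix x assume x: "x \<in> kleene_words A (insert s S) p q"
  show "x \<in> kleene_words A S p q \<union>
     lconc (kleene_words A S p s) (lconc (lstar (kleene_words A S s s)) (kleene_words A S s q))"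
  proof (cases "\<exists>j. 0 < j \<and> j < length x \<and> lquot (take j x) p \<notin> S")
    case False
    then have "x \<in> kleene_words A S p q"
      using x unfolding kleene_words_def by blast
    then show ?thesis ..
  next
    case True
    from kleene_words_insert_split[OF x True] obtain i where
      "take i x \<in> kleene_words A S p s" "drop i x \<in> kleene_words A (insert s S) s q"
      by blast
    then have "take i x @ drop i x \<in>
      lconc (kleene_words A S p s) (lconc (lstar (kleene_words A S s s)) (kleene_words A S s q))"
      using kleene_words_from_insert by (blast intro: lconcI)
    then show ?thesis by simp
  qed
next
  fix x assume "x \<in> kleene_words A S p q \<union>
     lconc (kleene_words A S p s) (lconc (lstar (kleene_words A S s s)) (kleene_words A S s q))"
  then show "x \<in> kleene_words A (insert s S) p q"
  proof
    assume "x \<in> kleene_words A S p q"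
    then show ?thesis using kleene_words_mono[of S "insert s S"] by blast
  next
    assume "x \<in> lconc (kleene_words A S p s)
                  (lconc (lstar (kleene_words A S s s)) (kleene_words A S s q))"
    then obtain x1 xs x2 where x: "x = x1 @ xs @ x2" "x1 \<in> kleene_words A S p s"
      "xs \<in> lstar (kleene_words A S s s)" "x2 \<in> kleene_words A S s q"
      unfolding lconc_def by blast
    then have "x1 \<in> kleene_words A (insert s S) p s" "x2 \<in> kleene_words A (insert s S) s q"
      using kleene_words_mono[of S "insert s S"] by blast+
    then show ?thesis
      unfolding x(1) using lstar_kleene_words[OF x(3)]
      by (intro append_in_kleene_words[of _ A "insert s S" _ s]) auto
  qed
qed

lemma regular_kleene_words:
  assumes "finite A" "finite S"
  shows "regular (kleene_words A S p q)"
  using assms(2)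
proof (induction S arbitrary: p q rule: finite_induct)
  case empty
  then show ?case using regular_kleene_words_empty[OF assms(1)] .
next
  case (insert s S)
  then show ?case
    unfolding kleene_words_insert by (intro reg_union reg_conc reg_star)
qed

theorem regular_iff_finite_residuals:
  assumes "finite A" and "L \<subseteq> lists A"
  shows "regular L \<longleftrightarrow> finite (residuals L)"
proof
  assume "finite (residuals L)"
  have "L = (\<Union>q \<in> {q \<in> residuals L. [] \<in> q}. kleene_words A (residuals L) L q)"
    using assms(2) by (auto simp: kleene_words_def)
  moreover have "regular \<dots>"
    using \<open>finite (residuals L)\<close> assms(1) by (intro regular_UN regular_kleene_words) auto
  ultimately show "regular L" by simp
qed (rule finite_residuals)

lemma regular_Diff:
  assumes "finite A" "L1 \<subseteq> lists A" "regular L1" "regular L2"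
  shows "regular (L1 - L2)"
proof -
  have "residuals (L1 - L2) \<subseteq> (\<lambda>(P, Q). P - Q) ` (residuals L1 \<times> residuals L2)"
  proof
    fix Q assume "Q \<in> residuals (L1 - L2)"
    then obtain x where "Q = (\<lambda>(P, Q). P - Q) (lquot x L1, lquot x L2)"
      by (auto simp: residuals_def lquot_Diff)
    then show "Q \<in> (\<lambda>(P, Q). P - Q) ` (residuals L1 \<times> residuals L2)"
      by (rule image_eqI) simp
  qed
  moreover have "finite (residuals L1 \<times> residuals L2)"
    using finite_residuals assms(3,4) by blast
  ultimately have "finite (residuals (L1 - L2))"
    by (rule finite_surj[rotated])
  moreover have "L1 - L2 \<subseteq> lists A"
    using assms(2) by blast
  ultimately show ?thesis
    using regular_iff_finite_residuals[OF assms(1)] by blast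
qed

lemma regular_if_residuals_factor:
  assumes "finite A" "L' \<subseteq> lists A" "regular L" "\<And>y. lquot y L' = F (lquot y L)"
  shows "regular L'"
proof -
  have "residuals L' \<subseteq> F ` residuals L"
    unfolding residuals_def assms(4) by blast
  then have "finite (residuals L')"
    using finite_residuals[OF assms(3)] by (rule finite_surj[rotated])
  then show ?thesis
    using regular_iff_finite_residuals[OF assms(1,2)] by blast
qed

lemma regular_lquot:
  assumes "finite A" "L \<subseteq> lists A" "regular L"
  shows "regular (lquot x L)"
proof -
  have "residuals (lquot x L) \<subseteq> residuals L"
    unfolding residuals_def by (auto simp flip: lquot_append)
  then have "finite (residuals (lquot x L))"
    using finite_residuals[OF assms(3)] finite_subset by blast
  moreover have "lquot x L \<subseteq> lists A"
    using assms(2) by auto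
  ultimately show ?thesis
    using regular_iff_finite_residuals[OF assms(1)] by blast
qed

lemma regular_lists:
  assumes "finite A"
  shows "regular (lists A)"
proof -
  have "residuals (lists A) \<subseteq> {lists A, {}}"
    by (auto simp: residuals_def lquot_def)
  then have "finite (residuals (lists A))"
    by (rule finite_subset) simp
  then show ?thesis
    using regular_iff_finite_residuals[OF assms] by blast
qed

lemma regular_infinite_lquot:
  assumes "finite A" "L \<subseteq> lists A" "regular L"
  shows "regular {u \<in> L. infinite (lquot (u @ v) L)}"
proof (rule regular_if_residuals_factor[OF assms(1) _ assms(3)])
  show "{u \<in> L. infinite (lquot (u @ v) L)} \<subseteq> lists A"
    using assms(2) by blast
  show "lquot y {u \<in> L. infinite (lquot (u @ v) L)} =
          (\<lambda>Q. {u \<in> Q. infinite (lquot (u @ v) Q)}) (lquot y L)" for y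
    by (auto simp: lquot_def)
qed

section \<open>Alternating words\<close>

fun alternating :: "'a set \<Rightarrow> 'a set \<Rightarrow> 'a list \<Rightarrow> bool" where
  "alternating P Q [] \<longleftrightarrow> True"
| "alternating P Q (a # x) \<longleftrightarrow> a \<in> P \<and> alternating Q P x"

lemma alternating_append:
  "alternating P Q (x @ y) \<longleftrightarrow>
     alternating P Q x \<and> (if even (length x) then alternating P Q y else alternating Q P y)"
  by (induction x arbitrary: P Q) auto

lemma alternating_in_lists: "alternating P Q x \<Longrightarrow> x \<in> lists (P \<union> Q)"
  by (induction x arbitrary: P Q) auto

lemma alternating_nth:
  "alternating P Q x \<Longrightarrow> i < length x \<Longrightarrow> x ! i \<in> (if even i then P else Q)"
proof (induction x arbitrary: P Q i)
  case (Cons a x)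
  show ?case
  proof (cases i)
    case (Suc j)
    then show ?thesis using Cons.IH[of Q P j] Cons.prems by auto
  qed (use Cons.prems in auto)
qed simp

lemma alternating_nth_in_iff:
  assumes "alternating P Q x" "P \<inter> Q = {}" "i < length x"
  shows "x ! i \<in> P \<longleftrightarrow> even i"
  using alternating_nth[OF assms(1,3)] assms(2) by auto

lemma SG_words_iff: "x \<in> SG_words \<Sigma> \<Gamma> \<longleftrightarrow> alternating \<Sigma> \<Gamma> x \<and> even (length x)"
proof
  show "x \<in> SG_words \<Sigma> \<Gamma> \<Longrightarrow> alternating \<Sigma> \<Gamma> x \<and> even (length x)"
    unfolding SG_words_def by (induction rule: lstar.induct) auto
  show "alternating \<Sigma> \<Gamma> x \<and> even (length x) \<Longrightarrow> x \<in> SG_words \<Sigma> \<Gamma>"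
    unfolding SG_words_def
  proof (induction x rule: induct_list012)
    case (3 a b x)
    then show ?case using lstar_app[of "[a, b]"] by simp
  qed (auto intro: lstar_Nil)
qed

lemma SG_prefix_closed_append:
  assumes "SG_prefix_closed \<Sigma> \<Gamma> U"
  shows "z \<in> SG_words \<Sigma> \<Gamma> \<Longrightarrow> x \<in> SG_words \<Sigma> \<Gamma> \<Longrightarrow> x @ z \<in> U \<Longrightarrow> x \<in> U"
  unfolding SG_words_def
proof (induction z arbitrary: x rule: lstar.induct)
  case (lstar_app y z)
  then obtain a b where y: "y = [a, b]" "a \<in> \<Sigma>" "b \<in> \<Gamma>"
    by blast
  then have "x @ [a, b] \<in> lstar {[a, b] | a b. a \<in> \<Sigma> \<and> b \<in> \<Gamma>}"
    using lstar_append[OF lstar_app.prems(1) lstar.lstar_app[OF lstar_app.hyps(1) lstar_Nil]] by simp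
  then have "x @ [a, b] \<in> U"
    using lstar_app y by simp
  then show ?case
    using assms lstar_app.prems(1) y unfolding SG_prefix_closed_def SG_words_def by blast
qed simp

lemma shift_append_le: "shift \<Sigma> (p @ q) \<le> length p + shift \<Sigma> q"
proof -
  let ?S = "\<lambda>w. {i. Suc i < length w \<and> (w ! i \<in> \<Sigma>) \<noteq> (w ! Suc i \<in> \<Sigma>)}"
  have "?S (p @ q) \<subseteq> {..<length p} \<union> (\<lambda>j. j + length p) ` ?S q"
  proof
    fix i assume i: "i \<in> ?S (p @ q)"
    show "i \<in> {..<length p} \<union> (\<lambda>j. j + length p) ` ?S q"
    proof (cases "i < length p")
      case False
      then have "i - length p \<in> ?S q"
        using i by (auto simp: nth_append Suc_diff_le)
      then show ?thesis using False by (intro UnI2 image_eqI[of _ _ "i - length p"]) auto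
    qed simp
  qed
  moreover have "finite (?S q)"
    by (rule finite_subset[of _ "{..<length q}"]) auto
  ultimately have "card (?S (p @ q)) \<le> card {..<length p} + card ((\<lambda>j. j + length p) ` ?S q)"
    by (meson card_Un_le card_mono finite_Un finite_imageI finite_lessThan order_trans)
  also have "\<dots> \<le> length p + card (?S q)"
    using card_image_le[OF \<open>finite (?S q)\<close>] by simp
  finally show ?thesis by (simp add: shift_def)
qed

lemma shift_drop_le: "shift \<Sigma> (drop k w) \<le> shift \<Sigma> w"
proof -
  let ?S = "\<lambda>w. {i. Suc i < length w \<and> (w ! i \<in> \<Sigma>) \<noteq> (w ! Suc i \<in> \<Sigma>)}"
  have "(\<lambda>j. j + k) ` ?S (drop k w) \<subseteq> ?S w"
    by (auto simp: add.commute)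
  moreover have "finite (?S w)"
    by (rule finite_subset[of _ "{..<length w}"]) auto
  ultimately have "card ((\<lambda>j. j + k) ` ?S (drop k w)) \<le> card (?S w)"
    by (rule card_mono[rotated])
  moreover have "inj_on (\<lambda>j. j + k) (?S (drop k w))"
    by (auto simp: inj_on_def)
  ultimately show ?thesis by (simp add: shift_def card_image)
qed

lemma shift_lists_append_lists_le:
  assumes "\<Sigma> \<inter> \<Gamma> = {}" "s \<in> lists \<Sigma>" "g \<in> lists \<Gamma>"
  shows "shift \<Sigma> (s @ g) \<le> 1"
proof -
  have mem: "(s @ g) ! j \<in> \<Sigma> \<longleftrightarrow> j < length s" if "j < length (s @ g)" for j
    using assms that nth_mem[of "j - length s" g] by (auto simp: nth_append)
  have "{i. Suc i < length (s @ g) \<and> ((s @ g) ! i \<in> \<Sigma>) \<noteq> ((s @ g) ! Suc i \<in> \<Sigma>)}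
          \<subseteq> {length s - 1}"
    using mem by auto
  then show ?thesis
    unfolding shift_def using card_mono[of "{length s - 1}"] by fastforce
qed

lemma shift_eq_length_if_all_shifts:
  assumes "\<And>i. Suc i < length z \<Longrightarrow> (z ! i \<in> \<Sigma>) \<noteq> (z ! Suc i \<in> \<Sigma>)"
  shows "shift \<Sigma> z = length z - 1"
proof -
  have "{i. Suc i < length z \<and> (z ! i \<in> \<Sigma>) \<noteq> (z ! Suc i \<in> \<Sigma>)} = {..<length z - 1}"
  proof (intro equalityI subsetI)
    fix i assume "i \<in> {..<length z - 1}"
    then have "Suc i < length z"
      by simp
    then show "i \<in> {i. Suc i < length z \<and> (z ! i \<in> \<Sigma>) \<noteq> (z ! Suc i \<in> \<Sigma>)}"
      using assms[of i] by blast
  qed auto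
  then show ?thesis by (simp add: shift_def)
qed

lemma append_Cons_eq_append_cases:
  assumes "p @ e # r = s @ g"
  obtains g' where "g = g' @ e # r" | s' where "s = p @ e # s'" "r = s' @ g"
proof -
  obtain us where "p = s @ us \<and> us @ e # r = g \<or> p @ us = s \<and> e # r = us @ g"
    using assms append_eq_append_conv2[of p "e # r" s g] by blast
  then show thesis
  proof
    assume "p = s @ us \<and> us @ e # r = g"
    then show thesis using that(1) by blast
  next
    assume split: "p @ us = s \<and> e # r = us @ g"
    show thesis
    proof (cases us)
      case Nil
      then show thesis using split that(1)[of "[]"] by simp
    next
      case (Cons u s')
      then show thesis using split that(2)[of s'] by auto
    qed
  qed
qed

lemma sem_eq_Nil_iff:
  assumes "\<Sigma> \<inter> \<Gamma> = {}"
  shows "sem \<Sigma> \<Gamma> x = ([], []) \<longleftrightarrow> x = []"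
  using assms by (cases x) (auto simp: sem_def proj_i_def proj_o_def filter_empty_conv)

lemma sem_Cons_eq_imp_eq:
  assumes "sem \<Sigma> \<Gamma> (e # r) = sem \<Sigma> \<Gamma> (d # r')" "\<Sigma> \<inter> \<Gamma> = {}"
    and "e \<in> \<Sigma> \<union> \<Gamma>" "d \<in> \<Sigma> \<union> \<Gamma>" "e \<in> \<Sigma> \<longleftrightarrow> d \<in> \<Sigma>"
  shows "e = d"
proof (cases "e \<in> \<Sigma>")
  case True
  with assms(2,5) have "e \<notin> \<Gamma>" "d \<notin> \<Gamma>"
    by auto
  then show ?thesis using assms(1) by (simp add: sem_def proj_i_def)
next
  case False
  with assms(3,4,5) have "e \<in> \<Gamma>" "d \<in> \<Gamma>" "e \<notin> \<Sigma>" "d \<notin> \<Sigma>"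
    by auto
  then show ?thesis using assms(1) by (simp add: sem_def proj_o_def)
qed

section \<open>Maximally synchronised words of \<open>U \<Sigma>\<^sup>* \<Gamma>\<^sup>*\<close>\<close>

text \<open>The output \<open>b\<close> is delayed: as \<open>(u a b)\<inverse>U\<close> is infinite, it could directly follow \<open>a\<close>.\<close>

definition delayed_words :: "'a set \<Rightarrow> 'a set \<Rightarrow> 'a list set \<Rightarrow> 'a list set" where
  "delayed_words \<Sigma> \<Gamma> U =
    {u @ a # c # s @ b # g | u a b c s g. u \<in> U \<and> a \<in> \<Sigma> \<and> b \<in> \<Gamma> \<and> c \<in> \<Sigma> \<and>
       s \<in> lists \<Sigma> \<and> g \<in> lists \<Gamma> \<and> infinite (lquot (u @ [a, b]) U)}"

locale regular_SG_prefix_closed =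
  fixes \<Sigma> \<Gamma> :: "'a set" and U :: "'a list set"
  assumes finite_Sigma: "finite \<Sigma>" and finite_Gamma: "finite \<Gamma>"
    and disjoint: "\<Sigma> \<inter> \<Gamma> = {}"
    and U_SG_words: "U \<subseteq> SG_words \<Sigma> \<Gamma>"
    and regular_U: "regular U"
    and prefix_closed: "SG_prefix_closed \<Sigma> \<Gamma> U"
begin

abbreviation T :: "'a list set" where
  "T \<equiv> lconc U (lconc (lists \<Sigma>) (lists \<Gamma>))"

lemma in_T_iff: "w \<in> T \<longleftrightarrow> (\<exists>u s g. w = u @ s @ g \<and> u \<in> U \<and> s \<in> lists \<Sigma> \<and> g \<in> lists \<Gamma>)"
  unfolding lconc_def by blast

lemma alternating_if_in_U: "u \<in> U \<Longrightarrow> alternating \<Sigma> \<Gamma> u \<and> even (length u)"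
  using U_SG_words SG_words_iff by blast

lemma U_lists: "U \<subseteq> lists (\<Sigma> \<union> \<Gamma>)"
  using alternating_if_in_U alternating_in_lists by blast

lemma T_lists: "T \<subseteq> lists (\<Sigma> \<union> \<Gamma>)"
proof
  fix w assume "w \<in> T"
  then obtain u s g where "w = u @ s @ g" "u \<in> U" "s \<in> lists \<Sigma>" "g \<in> lists \<Gamma>"
    by (auto simp: in_T_iff)
  then show "w \<in> lists (\<Sigma> \<union> \<Gamma>)"
    using subsetD[OF U_lists, of u] by auto
qed

lemma regular_T: "regular T"
  by (intro reg_conc regular_U regular_lists finite_Sigma finite_Gamma)

lemma alternating_if_infinite_lquot: "infinite (lquot x U) \<Longrightarrow> alternating \<Sigma> \<Gamma> x"
  using alternating_if_in_U alternating_append by (metis ex_in_conv finite.emptyI in_lquot_iff)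

lemma infinite_lquot_prefix: "infinite (lquot (x @ y) U) \<Longrightarrow> infinite (lquot x U)"
  using finite_lquot by (metis lquot_append)

lemma append_pair_in_U:
  assumes "infinite (lquot (u @ [a, b]) U)" "u \<in> U" "a \<in> \<Sigma>" "b \<in> \<Gamma>"
  shows "u @ [a, b] \<in> U"
proof -
  obtain z where z: "(u @ [a, b]) @ z \<in> U"
    using assms(1) by (metis ex_in_conv finite.emptyI in_lquot_iff)
  have "u @ [a, b] \<in> SG_words \<Sigma> \<Gamma>"
    using alternating_if_in_U[OF assms(2)] assms(3,4) by (simp add: SG_words_iff alternating_append)
  moreover from this have "z \<in> SG_words \<Sigma> \<Gamma>"
    using alternating_if_in_U[OF z] by (simp add: SG_words_iff alternating_append)
  ultimately show ?thesis
    using SG_prefix_closed_append[OF prefix_closed] z by blast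
qed

lemma RegFS_lquot_T_if_finite:
  assumes "finite (lquot x U)"
  shows "RegFS \<Sigma> (lquot x T)"
proof -
  define M where "M = Max (length ` lquot x U)"
  have M: "length z \<le> M" if "z \<in> lquot x U" for z
    unfolding M_def using assms that by (intro Max_ge) auto
  have "shift \<Sigma> z \<le> M + 1" if "z \<in> lquot x T" for z
  proof -
    obtain u s g where w: "x @ z = u @ s @ g" "u \<in> U" "s \<in> lists \<Sigma>" "g \<in> lists \<Gamma>"
      using \<open>z \<in> lquot x T\<close> by (auto simp: in_T_iff)
    have sg: "shift \<Sigma> (s @ g) \<le> 1"
      using shift_lists_append_lists_le[OF disjoint w(3,4)] .
    from w(1) obtain us where "x = u @ us \<and> us @ z = s @ g \<or> x @ us = u \<and> z = us @ s @ g"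
      by (auto simp: append_eq_append_conv2)
    then show ?thesis
    proof
      assume "x = u @ us \<and> us @ z = s @ g"
      then have "z = drop (length us) (s @ g)"
        by (metis append_eq_conv_conj)
      then show ?thesis using shift_drop_le[of \<Sigma> "length us" "s @ g"] sg by simp
    next
      assume split: "x @ us = u \<and> z = us @ s @ g"
      then have "length us \<le> M"
        using M w(2) by simp
      then show ?thesis using shift_append_le[of \<Sigma> us "s @ g"] split sg by simp
    qed
  qed
  moreover have "regular (lquot x T)"
    using regular_lquot[OF _ T_lists regular_T] finite_Sigma finite_Gamma by blast
  ultimately show ?thesis
    unfolding RegFS_def by blast
qed

lemma not_RegFS_lquot_T_if_infinite:
  assumes "infinite (lquot x U)"
  shows "\<not> RegFS \<Sigma> (lquot x T)"
proof
  assume "RegFS \<Sigma> (lquot x T)"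
  then obtain B where B: "\<And>z. z \<in> lquot x T \<Longrightarrow> shift \<Sigma> z \<le> B"
    unfolding RegFS_def by blast
  have "length z \<le> B + 1" if "z \<in> lquot x U" for z
  proof -
    have xz: "alternating \<Sigma> \<Gamma> (x @ z)"
      using alternating_if_in_U that by simp
    have "(x @ z) @ [] @ [] \<in> T"
      using that by (intro lconcI) auto
    then have "shift \<Sigma> z \<le> B"
      using B by simp
    moreover have "shift \<Sigma> z = length z - 1"
    proof (rule shift_eq_length_if_all_shifts)
      fix i assume "Suc i < length z"
      then show "(z ! i \<in> \<Sigma>) \<noteq> (z ! Suc i \<in> \<Sigma>)"
        using alternating_nth_in_iff[OF xz disjoint, of "length x + i"]
          alternating_nth_in_iff[OF xz disjoint, of "length x + Suc i"] by (simp add: nth_append)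
    qed
    ultimately show ?thesis by simp
  qed
  moreover have "set z \<subseteq> \<Sigma> \<union> \<Gamma>" if "z \<in> lquot x U" for z
    using that subsetD[OF U_lists, of "x @ z"] by auto
  ultimately have "lquot x U \<subseteq> {z. set z \<subseteq> \<Sigma> \<union> \<Gamma> \<and> length z \<le> B + 1}"
    by blast
  then show False
    using assms finite_lists_length_le[of "\<Sigma> \<union> \<Gamma>" "B + 1"] finite_Sigma finite_Gamma
    by (meson finite_UnI finite_subset)
qed

lemma RegFS_lquot_T_iff: "RegFS \<Sigma> (lquot x T) \<longleftrightarrow> finite (lquot x U)"
  using RegFS_lquot_T_if_finite not_RegFS_lquot_T_if_infinite by blast

lemma delayed_not_in_maxsync:
  assumes "w \<in> delayed_words \<Sigma> \<Gamma> U"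
  shows "w \<notin> maxsync \<Sigma> \<Gamma> T"
proof
  assume max: "w \<in> maxsync \<Sigma> \<Gamma> T"
  obtain u a b c s g where w: "w = u @ a # c # s @ b # g" and u: "u \<in> U"
    and letters: "a \<in> \<Sigma>" "b \<in> \<Gamma>" "c \<in> \<Sigma>" "s \<in> lists \<Sigma>" "g \<in> lists \<Gamma>"
    and inf: "infinite (lquot (u @ [a, b]) U)"
    using assms unfolding delayed_words_def by blast
  define w' where "w' = (u @ [a, b]) @ (c # s) @ g"
  have "w' \<in> T"
    unfolding w'_def using append_pair_in_U[OF inf u] letters by (intro lconcI) auto
  moreover have "sem \<Sigma> \<Gamma> w' = sem \<Sigma> \<Gamma> w"
    using letters disjoint
    by (auto simp: w w'_def sem_def proj_i_def proj_o_def filter_empty_conv filter_id_conv)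
  ultimately have "sync_le \<Sigma> \<Gamma> T w' w"
    using max unfolding maxsync_def by blast
  then have "RegFS \<Sigma> (lquot (u @ [a, c]) T) \<Longrightarrow> RegFS \<Sigma> (lquot (u @ [a, b]) T)"
    unfolding sync_le_def w'_def w by (auto dest!: spec[of _ "length u + 2"])
  moreover have "\<not> alternating \<Sigma> \<Gamma> (u @ [a, c])"
    using alternating_if_in_U[OF u] letters disjoint by (auto simp: alternating_append)
  then have "finite (lquot (u @ [a, c]) U)"
    using alternating_if_infinite_lquot by blast
  ultimately show False
    using inf by (simp add: RegFS_lquot_T_iff)
qed

text \<open>If \<open>e\<close> and \<open>d\<close> lie in the same alphabet, the projections force \<open>e = d\<close>.
  Otherwise, \<open>ps d\<close> being alternating, position \<open>|ps|\<close> of \<open>w = u s g\<close> lies beyond \<open>u\<close>: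
  for \<open>e \<in> \<Gamma>\<close> no input letter is left after it, and for \<open>e \<in> \<Sigma>\<close> we get \<open>ps = u c\<close> and
  \<open>w = u c e s' d g'\<close>, so \<open>w\<close> is delayed.\<close>

lemma next_letter_eq_if_infinite_lquot:
  assumes w: "ps @ e # r \<in> T" "ps @ e # r \<notin> delayed_words \<Sigma> \<Gamma> U"
    and sem: "sem \<Sigma> \<Gamma> (e # r) = sem \<Sigma> \<Gamma> (d # r')"
    and inf: "infinite (lquot (ps @ [d]) U)"
  shows "e = d"
proof (rule ccontr)
  assume "e \<noteq> d"
  have alt: "alternating \<Sigma> \<Gamma> (ps @ [d])"
    using alternating_if_infinite_lquot[OF inf] .
  have d: "d \<in> \<Sigma> \<longleftrightarrow> even (length ps)" "d \<in> \<Sigma> \<union> \<Gamma>"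
    using alternating_nth_in_iff[OF alt disjoint, of "length ps"] alternating_in_lists[OF alt] by auto
  have "e \<in> \<Sigma> \<union> \<Gamma>"
    using w(1) T_lists by auto
  then have e_side: "e \<in> \<Sigma> \<longleftrightarrow> d \<notin> \<Sigma>"
    using sem_Cons_eq_imp_eq[OF sem disjoint _ d(2)] \<open>e \<noteq> d\<close> by blast
  obtain u s g where split: "ps @ e # r = u @ s @ g" and u: "u \<in> U"
    and s: "s \<in> lists \<Sigma>" and g: "g \<in> lists \<Gamma>"
    using w(1) by (auto simp: in_T_iff)
  have u_alt: "alternating \<Sigma> \<Gamma> u" "even (length u)"
    using alternating_if_in_U[OF u] by auto
  show False
  proof (cases "length ps < length u")
    case True
    then have "e = u ! length ps"
      using arg_cong[OF split, of "\<lambda>w. w ! length ps"] by (simp add: nth_append)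
    then show False
      using alternating_nth_in_iff[OF u_alt(1) disjoint True] d(1) e_side by simp
  next
    case False
    then have "take (length u) ps = u"
      using arg_cong[OF split, of "take (length u)"] by simp
    then obtain p where ps: "ps = u @ p"
      by (metis append_take_drop_id)
    with split have p: "p @ e # r = s @ g"
      by simp
    show False
    proof (cases "e \<in> \<Sigma>")
      case False
      with p s obtain g' where "g = g' @ e # r"
        by (cases rule: append_Cons_eq_append_cases) auto
      then have "proj_i \<Gamma> (e # r) = []"
        using g by (auto simp: proj_i_def filter_empty_conv)
      moreover have "d \<notin> \<Gamma>"
        using False e_side disjoint by blast
      ultimately show False
        using sem by (simp add: sem_def proj_i_def)
    next
      case True
      with p g disjoint obtain s' where s': "s = p @ e # s'" "r = s' @ g"
        by (cases rule: append_Cons_eq_append_cases) auto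
      have p_alt: "alternating \<Sigma> \<Gamma> p" and "odd (length p)"
        using alt d(1) True e_side u_alt(2) by (auto simp: ps alternating_append)
      moreover have "p \<in> lists \<Sigma>"
        using s s'(1) by simp
      ultimately obtain c where c: "p = [c]" "c \<in> \<Sigma>"
        using alternating_nth_in_iff[OF p_alt disjoint, of 1] disjoint
        by (cases p rule: remdups_adj.cases) auto
      have "\<forall>x\<in>set g. x \<notin> \<Sigma>"
        using g disjoint by blast
      then have "proj_o \<Sigma> (e # r) = g"
        using s s' True by (auto simp: proj_o_def filter_empty_conv filter_id_conv)
      then obtain g' where "g = d # g'"
        using sem d(1) True e_side by (auto simp: sem_def proj_o_def)
      then have "ps @ e # r \<in> delayed_words \<Sigma> \<Gamma> U"
        unfolding delayed_words_def using u c True s s' g inf d(2) e_side ps by fastforce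
      then show False
        using w(2) by contradiction
    qed
  qed
qed

lemma take_eq_if_infinite_lquot:
  assumes w: "w \<in> T" "w \<notin> delayed_words \<Sigma> \<Gamma> U"
    and w': "w' \<in> T" "sem \<Sigma> \<Gamma> w' = sem \<Sigma> \<Gamma> w"
    and inf: "infinite (lquot (take i w') U)"
  shows "take i w = take i w'"
proof (rule ccontr)
  assume differ: "take i w \<noteq> take i w'"
  obtain ps r r' where ps: "w = ps @ r" "w' = ps @ r'"
    and diverge: "r = [] \<or> r' = [] \<or> hd r \<noteq> hd r'"
    using longest_common_prefix by blast
  have sem_r: "sem \<Sigma> \<Gamma> r = sem \<Sigma> \<Gamma> r'"
    using w'(2) by (simp add: ps sem_def proj_i_def proj_o_def)
  have "r \<noteq> []" "r' \<noteq> []"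
  proof -
    have "r = [] \<longleftrightarrow> r' = []"
      using sem_r sem_eq_Nil_iff[OF disjoint] by metis
    moreover have "r \<noteq> [] \<or> r' \<noteq> []"
      using differ ps by force
    ultimately show "r \<noteq> []" "r' \<noteq> []"
      by blast+
  qed
  with diverge obtain e d r1 r1' where r: "r = e # r1" "r' = d # r1'" "e \<noteq> d"
    by (auto simp: neq_Nil_conv)
  have "length ps < i"
  proof (rule ccontr)
    assume "\<not> length ps < i"
    then show False
      using differ by (simp add: ps)
  qed
  then have prefix: "take i w' = (ps @ [d]) @ take (i - Suc (length ps)) r1'"
    by (simp add: ps r take_Cons')
  have "infinite (lquot (ps @ [d]) U)"
    using inf unfolding prefix by (rule infinite_lquot_prefix)
  then have "e = d"
    using next_letter_eq_if_infinite_lquot[of ps e r1 d r1'] w sem_r by (simp add: ps r(1,2))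
  with r(3) show False ..
qed

lemma not_delayed_in_maxsync:
  assumes "w \<in> T" "w \<notin> delayed_words \<Sigma> \<Gamma> U"
  shows "w \<in> maxsync \<Sigma> \<Gamma> T"
  unfolding maxsync_def sync_le_def
proof (intro CollectI conjI ballI impI allI assms(1))
  fix w' i
  assume w': "w' \<in> T" "sem \<Sigma> \<Gamma> w' = sem \<Sigma> \<Gamma> w" and "RegFS \<Sigma> (lquot (take i w) T)"
  then have "finite (lquot (take i w) U)"
    by (simp add: RegFS_lquot_T_iff)
  then have "finite (lquot (take i w') U)"
    using take_eq_if_infinite_lquot[OF assms w'] by metis
  then show "RegFS \<Sigma> (lquot (take i w') T)"
    by (simp add: RegFS_lquot_T_iff)
qed (use assms in simp_all)

lemma maxsync_eq: "maxsync \<Sigma> \<Gamma> T = T - delayed_words \<Sigma> \<Gamma> U"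
  using delayed_not_in_maxsync not_delayed_in_maxsync by (auto simp: maxsync_def)

lemma regular_delayed_words: "regular (delayed_words \<Sigma> \<Gamma> U)"
proof -
  let ?D = "\<lambda>a b c. lconc {u \<in> U. infinite (lquot (u @ [a, b]) U)}
                       (lconc {[a, c]} (lconc (lists \<Sigma>) (lconc {[b]} (lists \<Gamma>))))"
  have "delayed_words \<Sigma> \<Gamma> U = (\<Union>(a, b) \<in> \<Sigma> \<times> \<Gamma>. \<Union>c \<in> \<Sigma>. ?D a b c)"
  proof (intro equalityI subsetI)
    fix w assume "w \<in> delayed_words \<Sigma> \<Gamma> U"
    then obtain u a b c s g where w: "w = u @ a # c # s @ b # g" and "u \<in> U" "a \<in> \<Sigma>"
      "b \<in> \<Gamma>" "c \<in> \<Sigma>" "s \<in> lists \<Sigma>" "g \<in> lists \<Gamma>" "infinite (lquot (u @ [a, b]) U)"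
      unfolding delayed_words_def by blast
    then have "u @ [a, c] @ s @ [b] @ g \<in> ?D a b c"
      by (intro lconcI) auto
    then have "w \<in> ?D a b c"
      by (simp add: w)
    with \<open>a \<in> \<Sigma>\<close> \<open>b \<in> \<Gamma>\<close> \<open>c \<in> \<Sigma>\<close> show "w \<in> (\<Union>(a, b) \<in> \<Sigma> \<times> \<Gamma>. \<Union>c \<in> \<Sigma>. ?D a b c)"
      by blast
  next
    fix w assume "w \<in> (\<Union>(a, b) \<in> \<Sigma> \<times> \<Gamma>. \<Union>c \<in> \<Sigma>. ?D a b c)"
    then obtain a b c where "a \<in> \<Sigma>" "b \<in> \<Gamma>" "c \<in> \<Sigma>" "w \<in> ?D a b c"
      by blast
    then show "w \<in> delayed_words \<Sigma> \<Gamma> U"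
      unfolding delayed_words_def lconc_def by fastforce
  qed
  moreover have "regular (?D a b c)" for a b c
    using finite_Sigma finite_Gamma
    by (intro reg_conc regular_infinite_lquot[OF _ U_lists regular_U] regular_singleton
        regular_lists) auto
  ultimately show ?thesis
    using finite_Sigma finite_Gamma by (auto intro!: regular_UN)
qed

lemma regular_maxsync: "regular (maxsync \<Sigma> \<Gamma> T)"
  unfolding maxsync_eq
  using finite_Sigma finite_Gamma
  by (intro regular_Diff[OF _ T_lists regular_T regular_delayed_words]) auto

end

theorem mainTheorem19:
  fixes \<Sigma> \<Gamma> :: "'a set" and U :: "'a list set"
  assumes "finite \<Sigma>" and "finite \<Gamma>" and "\<Sigma> \<inter> \<Gamma> = {}"
    and "U \<subseteq> SG_words \<Sigma> \<Gamma>"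
    and "regular U"
    and "SG_prefix_closed \<Sigma> \<Gamma> U"
  shows "regular (maxsync \<Sigma> \<Gamma> (lconc U (lconc (lists \<Sigma>) (lists \<Gamma>))))"
proof -
  interpret regular_SG_prefix_closed \<Sigma> \<Gamma> U
    using assms by unfold_locales
  show ?thesis
    by (rule regular_maxsync)
qed

end
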